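(* Let $R$ be a $*$-reducing ring and let $p,q\in R$ be projections. Then the following are equivalent: (1) $pq-qp$ is MP invertible; (2) $pq$ and $p-q$ are both MP invertible.
   Context: $R$ is an associative ring with identity $1$ and an involution $a\mapsto a^*$ (satisfying $(a^* )^*=a$, $(a+b)^*=a^*+b^*$, $(ab)^*=b^*a^*$). $R$ is $*$-reducing if $a^*a=0$ implies $a=0$ for all $a\in R$. An element $a$ is MP invertible if there is $b$ with $aba=a$, $bab=b$, $(ab)^*=ab$, $(ba)^*=ba$. A projection is an element $p$ with $p^2=p=p^*$. *)

theory Defs
  imports Main
begin

class involution_ring = ring_1 +
  fixes invol :: "'a \<Rightarrow> 'a"
  assumes invol_invol: "invol (invol a) = a"
    and invol_add: "invol (a + b) = invol a + invol b"
    and invol_mult: "invol (a * b) = invol b * invol a"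

definition star_reducing :: "'a::involution_ring itself \<Rightarrow> bool" where
  "star_reducing _ \<longleftrightarrow> (\<forall>a::'a. invol a * a = 0 \<longrightarrow> a = 0)"

definition MP_invertible :: "'a::involution_ring \<Rightarrow> bool" where
  "MP_invertible a \<longleftrightarrow> (\<exists>b. a * b * a = a \<and> b * a * b = b \<and>
      invol (a * b) = a * b \<and> invol (b * a) = b * a)"

definition projection :: "'a::involution_ring \<Rightarrow> bool" where
  "projection p \<longleftrightarrow> p * p = p \<and> invol p = p"

end

theory Submission imports Defs begin

text \<open>
  Put \<open>d = p - q\<close> and \<open>s = p + q - 1\<close>. Then \<open>d\<^sup>2 + s\<^sup>2 = 1\<close>, the squares \<open>t = d\<^sup>2\<close> and
  \<open>u = s\<^sup>2\<close> commute with \<open>p\<close> and \<open>q\<close>, and \<open>pq - qp = ds = -sd\<close>, so that \<open>c = pq - qp\<close>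
  satisfies \<open>cc\<^sup>* = tu\<close>, while \<open>pq(pq)\<^sup>* = pu\<close> and \<open>qp(qp)\<^sup>* = qu\<close>.
  An element \<open>a\<close> is MP invertible iff \<open>a \<in> aa\<^sup>*R\<close> and \<open>a\<^sup>* \<in> a\<^sup>*aR\<close>; since \<open>c\<^sup>* = -c\<close>,
  \<open>d\<^sup>* = d\<close> and \<open>(pq)\<^sup>* = qp\<close>, only conditions of the first kind remain. Writing
  \<open>1 = t + u\<close> splits each membership into a \<open>t\<close>-part and a \<open>u\<close>-part: the \<open>t\<close>-part of
  \<open>c \<in> tuR\<close> is governed by \<open>d\<close> and the \<open>u\<close>-part by \<open>pq\<close> and \<open>qp\<close>. The criterion holds in
  every ring with involution.
\<close>

lemma invol_zero [simp]: "invol (0::'a::involution_ring) = 0"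
  using invol_add[of "0::'a" 0] by simp

lemma invol_minus [simp]: "invol (- a) = - invol (a::'a::involution_ring)"
  using invol_add[of a "- a"] by (simp add: add_eq_0_iff)

lemma invol_diff [simp]: "invol (a - b) = invol a - invol (b::'a::involution_ring)"
  using invol_add[of a "- b"] by simp

definition aastar_divides :: "'a::involution_ring \<Rightarrow> bool" where
  "aastar_divides a \<longleftrightarrow> (\<exists>x. a * invol a * x = a)"

lemma aastar_divides_uminus [simp]: "aastar_divides (- a) \<longleftrightarrow> aastar_divides a"
  unfolding aastar_divides_def by (metis minus_minus mult_minus_left mult_minus_right invol_minus)

lemma MP_invertibleI:
  fixes a :: "'a::involution_ring"
  assumes x: "a * invol a * x = a" and y: "y * invol a * a = a"
  shows "MP_invertible a"
proof -
  have x': "invol x * a * invol a = invol a"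
    using arg_cong[OF x, of invol] by (simp add: invol_mult invol_invol mult.assoc)
  have y': "invol a * a * invol y = invol a"
    using arg_cong[OF y, of invol] by (simp add: invol_mult invol_invol mult.assoc)
  have xa: "invol x * a = invol a * x"
    by (metis x x' mult.assoc)
  have ay: "a * invol y = y * invol a"
    by (metis y y' mult.assoc)
  have aya: "a * invol y * a = a"
    by (simp add: ay y)
  define b where "b = invol a * x * invol y"
  have ab: "a * b = a * invol y"
    unfolding b_def by (metis x mult.assoc)
  have ba: "b * a = invol x * a"
    unfolding b_def by (metis xa aya mult.assoc)
  show ?thesis
    unfolding MP_invertible_def
  proof (intro exI conjI)
    show "a * b * a = a" by (simp add: ab aya)
    show "b * a * b = b" by (metis ab ba b_def xa mult.assoc)
    show "invol (a * b) = a * b" by (simp add: ab ay invol_mult invol_invol)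
    show "invol (b * a) = b * a" by (simp add: ba xa invol_mult invol_invol)
  qed
qed

text \<open>For a Moore--Penrose inverse \<open>b\<close> of \<open>a\<close> the witnesses are \<open>b\<^sup>*\<close> and \<open>b\<close>.\<close>

lemma MP_invertible_iff_aastar_divides:
  fixes a :: "'a::involution_ring"
  shows "MP_invertible a \<longleftrightarrow> aastar_divides a \<and> aastar_divides (invol a)"
proof
  assume "MP_invertible a"
  then obtain b where b: "a * b * a = a" "invol (a * b) = a * b" "invol (b * a) = b * a"
    unfolding MP_invertible_def by blast
  have "a * invol a * invol b = a"
    by (metis b(1) b(3) invol_mult mult.assoc)
  moreover have "invol a * invol (invol a) * b = invol a"
    by (metis b(1) b(2) invol_invol invol_mult mult.assoc)
  ultimately show "aastar_divides a \<and> aastar_divides (invol a)"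
    unfolding aastar_divides_def by blast
next
  assume "aastar_divides a \<and> aastar_divides (invol a)"
  then obtain x y where x: "a * invol a * x = a" and y: "invol a * a * y = invol a"
    unfolding aastar_divides_def by (auto simp: invol_invol)
  have "invol y * invol a * a = a"
    using arg_cong[OF y, of invol] by (simp add: invol_mult invol_invol mult.assoc)
  with x show "MP_invertible a" by (rule MP_invertibleI)
qed

locale projection_pair =
  fixes p q :: "'a::involution_ring"
  assumes projection_p: "projection p" and projection_q: "projection q"
begin

lemma p_idem [simp]: "p * p = p" "p * (p * z) = p * z"
  and q_idem [simp]: "q * q = q" "q * (q * z) = q * z"
  and invol_p [simp]: "invol p = p" and invol_q [simp]: "invol q = q"
  using projection_p projection_q unfolding projection_def by (auto simp: mult.assoc[symmetric])

definition "s = p + q - 1"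
definition "t = (p - q) * (p - q)"
definition "u = s * s"

lemma t_plus_u: "t + u = 1"
  unfolding t_def u_def s_def by (simp add: algebra_simps)

lemma commutator_eq: "p * q - q * p = (p - q) * s" "p * q - q * p = - (s * (p - q))"
  unfolding s_def by (simp_all add: algebra_simps)

lemma t_commute_diff: "t * (p - q) = (p - q) * t"
  unfolding t_def by (simp add: algebra_simps)

lemma u_commute: "u * p = p * u" "u * q = q * u" "u * s = s * u" "u * t = t * u"
  unfolding t_def u_def s_def by (simp_all add: algebra_simps)

lemma p_times_s: "p * s = p * q"
  unfolding s_def by (simp add: algebra_simps)

lemma commutator_aastar: "(p * q - q * p) * invol (p * q - q * p) = t * u"
  unfolding t_def u_def s_def by (simp add: algebra_simps invol_mult)

lemma product_aastar: "p * q * invol (p * q) = p * u"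
  unfolding u_def s_def by (simp add: algebra_simps invol_mult)

lemma swapped_product_aastar: "q * p * invol (q * p) = q * u"
  unfolding u_def s_def by (simp add: algebra_simps invol_mult)

lemma projection_pair_swap: "projection_pair q p"
  by (unfold_locales) (fact projection_q projection_p)+

lemma diff_aastar_divides_if_commutator:
  assumes "aastar_divides (p * q - q * p)"
  shows "aastar_divides (p - q)"
proof -
  obtain x where x: "t * u * x = p * q - q * p"
    using assms commutator_aastar unfolding aastar_divides_def by metis
  have "(p - q) * invol (p - q) * (p - q + u * x * s) = t * (p - q) + (t * u * x) * s"
    by (simp add: t_def distrib_left mult.assoc)
  also have "\<dots> = t * (p - q) + (p - q) * s * s"
    by (simp add: x commutator_eq(1))
  also have "\<dots> = (p - q) * (t + u)"
    by (simp add: t_commute_diff u_def distrib_left mult.assoc)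
  finally show ?thesis
    unfolding aastar_divides_def t_plus_u by auto
qed

lemma product_aastar_divides_if_commutator:
  assumes "aastar_divides (p * q - q * p)"
  shows "aastar_divides (p * q)"
proof -
  obtain x where x: "t * u * x = p * q - q * p"
    using assms commutator_aastar unfolding aastar_divides_def by metis
  have "p * q * invol (p * q) * (s - t * x * (p - q)) = p * u * s - p * u * t * x * (p - q)"
    unfolding product_aastar by (simp add: right_diff_distrib mult.assoc)
  also have "\<dots> = p * s * u - p * (t * u * x) * (p - q)"
    by (simp add: u_commute(3,4) mult.assoc)
  also have "\<dots> = p * s * u + p * s * t"
    unfolding x unfolding commutator_eq(2) t_def by (simp add: mult.assoc)
  also have "\<dots> = p * s * (u + t)"
    by (simp add: distrib_left)
  finally show ?thesis
    unfolding aastar_divides_def add.commute[of u] t_plus_u p_times_s by auto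
qed

lemma commutator_aastar_divides:
  assumes "aastar_divides (p * q)" "aastar_divides (q * p)" "aastar_divides (p - q)"
  shows "aastar_divides (p * q - q * p)"
proof -
  obtain x y z where x: "p * u * x = p * q" and y: "q * u * y = q * p" and z: "t * z = p - q"
    using assms product_aastar swapped_product_aastar unfolding aastar_divides_def t_def
    by (metis invol_diff invol_p invol_q)
  have "u * (p * x) = p * q" "u * (q * y) = q * p"
    using x y by (simp_all add: u_commute(1,2) mult.assoc[symmetric])
  moreover have "t * u * (z * s) = u * (p * q - q * p)"
    by (metis z u_commute(4) commutator_eq(1) mult.assoc)
  ultimately have "(p * q - q * p) * invol (p * q - q * p) * (p * x - q * y + z * s)
      = (t + u) * (p * q - q * p)"
    unfolding commutator_aastar by (simp add: distrib_left distrib_right right_diff_distrib mult.assoc)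
  then show ?thesis
    unfolding aastar_divides_def t_plus_u by auto
qed

lemma MP_invertible_commutator_iff:
  "MP_invertible (p * q - q * p) \<longleftrightarrow> aastar_divides (p * q - q * p)"
proof -
  have invol_commutator: "invol (p * q - q * p) = - (p * q - q * p)"
    by (simp add: invol_mult)
  show ?thesis
    unfolding MP_invertible_iff_aastar_divides invol_commutator aastar_divides_uminus by simp
qed

lemma MP_invertible_diff_iff: "MP_invertible (p - q) \<longleftrightarrow> aastar_divides (p - q)"
  by (simp add: MP_invertible_iff_aastar_divides)

lemma MP_invertible_product_iff:
  "MP_invertible (p * q) \<longleftrightarrow> aastar_divides (p * q) \<and> aastar_divides (q * p)"
  by (simp add: MP_invertible_iff_aastar_divides invol_mult)

lemma MP_invertible_commutator_iff_product_and_diff: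
  "MP_invertible (p * q - q * p) \<longleftrightarrow> MP_invertible (p * q) \<and> MP_invertible (p - q)"
proof -
  have "aastar_divides (p * q - q * p) \<longleftrightarrow> aastar_divides (q * p - p * q)"
    by (metis aastar_divides_uminus minus_diff_eq)
  then show ?thesis
    using commutator_aastar_divides diff_aastar_divides_if_commutator
      product_aastar_divides_if_commutator
      projection_pair.product_aastar_divides_if_commutator[OF projection_pair_swap]
    by (auto simp: MP_invertible_commutator_iff MP_invertible_diff_iff MP_invertible_product_iff)
qed

end

theorem theorem2p13:
  fixes p q :: "'a::involution_ring"
  assumes "star_reducing TYPE('a)"
    and "projection p" and "projection q"
  shows "MP_invertible (p * q - q * p) \<longleftrightarrow> (MP_invertible (p * q) \<and> MP_invertible (p - q))"
proof -
  interpret projection_pair p q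
    using assms(2,3) by unfold_locales
  show ?thesis
    by (rule MP_invertible_commutator_iff_product_and_diff)
qed

end
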